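(* In the model described in the context, with $\tilde k(p)=(1+\theta)p+\alpha(p-p^2)$ for $\theta\ge0$ and $\alpha\ge0$, suppose $\gamma\big((1+\theta)+\alpha(1-2q)\big)>2\alpha q\lambda$. Then the optimal indemnity is $$I^*(x)=\begin{cases}0, & 0< x\le d^*,\\[2pt] x-d^*-\dfrac1\gamma\ln\dfrac{1+\theta+\alpha(1-2qe^{-\lambda x})}{1+\theta+\alpha(1-2qe^{-\lambda d^*})}, & x>d^*,\end{cases}$$ where $d^*\ge0$ is the unique non-negative solution $d$ of the following equation. If $\lambda\ne\gamma$: $$\frac{e^{\gamma d}(1-\alpha q^2e^{-2\lambda d})}{(1+\theta)+\alpha(1-2qe^{-\lambda d})}=1+q\gamma\,\frac{e^{(\gamma-\lambda)d}-1}{\gamma-\lambda}.$$ If $\lambda=\gamma$: $$e^{\lambda d}=(1+q\lambda d)\big((1+\theta)+\alpha(1-2qe^{-\lambda d})\big)+\alpha q^2e^{-\lambda d}.$$ Furthermore, $d^*>0$ if and only if either $\theta>0$ or both $q<1$ and $\alpha>0$.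
   Context: Let $X\ge0$ be a random variable with $\mathbb{P}(X=0)=1-q$, where $q\in(0,1]$, and with density $q\lambda e^{-\lambda x}$ on $(0,\infty)$, where $\lambda>0$. So $S_X(t)=qe^{-\lambda t}$ for $t\ge0$. $\mathcal{I}_c$ is the set of $I:[0,\infty)\to[0,\infty)$ with $0\le I(x)\le x$ and $0\le I(x)-I(y)\le x-y$ for $0\le y\le x$. For $Y\ge0$ with $S_Y(t)=\mathbb{P}(Y>t)$, the premium is $$\pi(Y)=\int_0^\infty\tilde k(S_Y(t))\,dt.$$ The buyer has wealth $w$ and utility $u$ with $u'(x)=e^{-\gamma x}$, $\gamma>0$. She chooses $I\in\mathcal{I}_c$ to maximize $\mathbb{E}[u(w-X+I(X)-\pi(I(X)))]$; the buyer's distortion is the identity. The optimal indemnity is unique up to $\mathbb{P}$-a.s. equality of $I(X)$. *)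

theory Defs
  imports "HOL-Analysis.Analysis"
begin

text \<open>Law of X: atom of mass 1-q at 0 and density q*lam*exp(-lam*x) on (0,inf).
  Expectation of f(X) for this law.\<close>
definition ExpX :: "real \<Rightarrow> real \<Rightarrow> (real \<Rightarrow> real) \<Rightarrow> real" where
  "ExpX q lam f = (1 - q) * f 0 + (LINT x:{0<..}|lborel. q * lam * exp (- lam * x) * f x)"

text \<open>Integrability of f(X) (the atom at 0 is always finite).\<close>
definition ExpX_integrable :: "real \<Rightarrow> real \<Rightarrow> (real \<Rightarrow> real) \<Rightarrow> bool" where
  "ExpX_integrable q lam f = set_integrable lborel {0<..} (\<lambda>x. q * lam * exp (- lam * x) * f x)"

definition ktilde :: "real \<Rightarrow> real \<Rightarrow> real \<Rightarrow> real" where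
  "ktilde \<theta> \<alpha> p = (1 + \<theta>) * p + \<alpha> * (p - p ^ 2)"

definition Ic :: "(real \<Rightarrow> real) set" where
  "Ic = {I. (\<forall>x\<ge>0. 0 \<le> I x \<and> I x \<le> x) \<and>
            (\<forall>x y. 0 \<le> y \<and> y \<le> x \<longrightarrow> 0 \<le> I x - I y \<and> I x - I y \<le> x - y)}"

definition survI :: "real \<Rightarrow> real \<Rightarrow> (real \<Rightarrow> real) \<Rightarrow> real \<Rightarrow> real" where
  "survI q lam I t = ExpX q lam (\<lambda>x. if I x > t then 1 else 0)"

definition premium :: "real \<Rightarrow> real \<Rightarrow> real \<Rightarrow> real \<Rightarrow> (real \<Rightarrow> real) \<Rightarrow> real" where
  "premium \<theta> \<alpha> q lam I = (LINT t:{0..}|lborel. ktilde \<theta> \<alpha> (survI q lam I t))"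

definition EU :: "(real \<Rightarrow> real) \<Rightarrow> real \<Rightarrow> real \<Rightarrow> real \<Rightarrow> real \<Rightarrow> real \<Rightarrow> (real \<Rightarrow> real) \<Rightarrow> real" where
  "EU u w \<theta> \<alpha> q lam I = ExpX q lam (\<lambda>x. u (w - x + I x - premium \<theta> \<alpha> q lam I))"

definition EU_integrable :: "(real \<Rightarrow> real) \<Rightarrow> real \<Rightarrow> real \<Rightarrow> real \<Rightarrow> real \<Rightarrow> real \<Rightarrow> (real \<Rightarrow> real) \<Rightarrow> bool" where
  "EU_integrable u w \<theta> \<alpha> q lam I = ExpX_integrable q lam (\<lambda>x. u (w - x + I x - premium \<theta> \<alpha> q lam I))"

text \<open>Optimality. Since u is bounded above (u' = exp(-gamma x), gamma > 0), a non-integrable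
  expected utility equals -infinity, so such indemnities can never beat an integrable one.\<close>
definition optimal :: "(real \<Rightarrow> real) \<Rightarrow> real \<Rightarrow> real \<Rightarrow> real \<Rightarrow> real \<Rightarrow> real \<Rightarrow> (real \<Rightarrow> real) \<Rightarrow> bool" where
  "optimal u w \<theta> \<alpha> q lam I \<longleftrightarrow> I \<in> Ic \<and> EU_integrable u w \<theta> \<alpha> q lam I \<and>
     (\<forall>J\<in>Ic. EU_integrable u w \<theta> \<alpha> q lam J \<longrightarrow> EU u w \<theta> \<alpha> q lam J \<le> EU u w \<theta> \<alpha> q lam I)"

text \<open>I(X) = J(X) almost surely (q > 0: the density is positive on (0,inf); atom at 0).\<close>
definition ae_equal_X :: "real \<Rightarrow> (real \<Rightarrow> real) \<Rightarrow> (real \<Rightarrow> real) \<Rightarrow> bool" where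
  "ae_equal_X q I J \<longleftrightarrow> (q < 1 \<longrightarrow> I 0 = J 0) \<and> (AE x in lborel. x > 0 \<longrightarrow> I x = J x)"

definition dstar_eq :: "real \<Rightarrow> real \<Rightarrow> real \<Rightarrow> real \<Rightarrow> real \<Rightarrow> real \<Rightarrow> bool" where
  "dstar_eq \<theta> \<alpha> q lam \<gamma> d \<longleftrightarrow>
     (if lam \<noteq> \<gamma> then
        exp (\<gamma> * d) * (1 - \<alpha> * q ^ 2 * exp (- 2 * lam * d)) / ((1 + \<theta>) + \<alpha> * (1 - 2 * q * exp (- lam * d)))
          = 1 + q * \<gamma> * (exp ((\<gamma> - lam) * d) - 1) / (\<gamma> - lam)
      else
        exp (lam * d) = (1 + q * lam * d) * ((1 + \<theta>) + \<alpha> * (1 - 2 * q * exp (- lam * d)))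
                        + \<alpha> * q ^ 2 * exp (- lam * d))"

definition Istar :: "real \<Rightarrow> real \<Rightarrow> real \<Rightarrow> real \<Rightarrow> real \<Rightarrow> real \<Rightarrow> real \<Rightarrow> real" where
  "Istar \<theta> \<alpha> q lam \<gamma> d x =
     (if x \<le> d then 0
      else x - d - (1 / \<gamma>) * ln ((1 + \<theta> + \<alpha> * (1 - 2 * q * exp (- lam * x)))
                                  / (1 + \<theta> + \<alpha> * (1 - 2 * q * exp (- lam * d)))))"

end

theory Submission
  imports Defs
begin

(*
  Under the contract Ist with deductible d the marginal utility of the final wealth is proportional
  to h x = exp (gamma (x - Ist x)).  With S the survival function of X and kS x = k'(S x), the
  hypothesis on gamma makes ell x = x - ln (kS x) / gamma increasing, and Ist = max 0 (ell - ell d);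
  so h = exp (gamma x) below d and h = mu d * kS above d, where mu d = exp (gamma * ell d).

  For an admissible J every superlevel set {J > s} is a ray {x > t} up to a null set, so the
  layer-cake formula and the tail identity  int_t^oo kS(x) f_X(x) dx = k (S t)  give
  E[h(X) J(X)] <= mu d * pi(J), with equality for Ist.  The equation for d* says precisely that
  E[h(X)] = mu d; the difference Phi of the two sides increases while k (S d) > 1, decreases
  afterwards to -oo, and Phi 0 >= 0, so it has exactly one root.

  Expanding the CARA utility to first order around the final wealth under Ist, the linear term
  has non-positive expectation, hence E u(W_J) + E[gap] <= E u(W_Ist).  The gap vanishes only if
  J - Ist is a.e. constant on (0, oo), and that constant is 0 since both indemnities are
  1-Lipschitz and vanish at 0.
*)

definition exp_primitive :: "real \<Rightarrow> real \<Rightarrow> real" where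
  "exp_primitive c d = (if c = 0 then d else (exp (c * d) - 1) / c)"

lemma exp_primitive_has_real_derivative:
  "(exp_primitive c has_real_derivative exp (c * d)) (at d)"
  unfolding exp_primitive_def[abs_def]
  by (cases "c = 0") (auto intro!: derivative_eq_intros)

lemma exp_primitive_0 [simp]: "exp_primitive c 0 = 0"
  by (simp add: exp_primitive_def)

lemma set_integral_has_integral_nonneg:
  fixes f :: "real \<Rightarrow> real"
  assumes f: "(f has_integral I) A" and nonneg: "\<And>x. x \<in> A \<Longrightarrow> 0 \<le> f x"
    and [measurable]: "A \<in> sets borel" "f \<in> borel_measurable borel"
  shows "set_integrable lborel A f" "(LINT x:A|lborel. f x) = I"
proof -
  have "integral\<^sup>N lborel (\<lambda>x. indicator A x * f x) = ennreal I"
    by (rule nn_integral_has_integral_lebesgue[OF nonneg f])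
  moreover have "I \<ge> 0" using has_integral_nonneg[OF f nonneg] .
  ultimately have "has_bochner_integral lborel (\<lambda>x. indicator A x * f x) I"
    by (intro has_bochner_integral_nn_integral) (use nonneg in \<open>auto simp: indicator_def\<close>)
  then show "set_integrable lborel A f" "(LINT x:A|lborel. f x) = I"
    unfolding set_integrable_def set_lebesgue_integral_def by (simp_all add: has_bochner_integral_iff)
qed

lemma set_integrable_exp_neg:
  fixes c a :: real
  assumes "c > 0"
  shows "set_integrable lborel {a..} (\<lambda>x. exp (- c * x))"
  using has_integral_exp_minus_to_infinity[OF assms, of a]
  by (rule set_integral_has_integral_nonneg) auto

lemma set_integral_exp_neg_tail:
  fixes c a :: real
  assumes "c > 0"
  shows "set_integrable lborel {a<..} (\<lambda>x. exp (- c * x))"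
    and "(LINT x:{a<..}|lborel. exp (- c * x)) = exp (- c * a) / c"
proof -
  have "((\<lambda>x. exp (- c * x)) has_integral exp (- c * a) / c) {a<..}"
    using has_integral_exp_minus_to_infinity[OF assms, of a]
    by (subst has_integral_spike_set_eq[where T = "{a..}"])
      (auto intro: negligible_subset[OF negligible_sing[of a]])
  then show "set_integrable lborel {a<..} (\<lambda>x. exp (- c * x))"
    and "(LINT x:{a<..}|lborel. exp (- c * x)) = exp (- c * a) / c"
    by (rule set_integral_has_integral_nonneg; simp)+
qed

lemma set_integral_exp_initial:
  fixes c d :: real
  assumes "d \<ge> 0"
  shows "set_integrable lborel {0<..d} (\<lambda>x. exp (c * x))"
    and "(LINT x:{0<..d}|lborel. exp (c * x)) = exp_primitive c d"
proof -
  have "((\<lambda>x. exp (c * x)) has_integral exp_primitive c d - exp_primitive c 0) {0..d}"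
    using assms exp_primitive_has_real_derivative
    by (intro fundamental_theorem_of_calculus)
      (auto simp: has_real_derivative_iff_has_vector_derivative[symmetric] intro: has_field_derivative_at_within)
  then have "((\<lambda>x. exp (c * x)) has_integral exp_primitive c d) {0<..d}"
    by (subst has_integral_spike_set_eq[where T = "{0..d}"])
      (auto intro: negligible_subset[OF negligible_sing[of 0]])
  then show "set_integrable lborel {0<..d} (\<lambda>x. exp (c * x))"
    and "(LINT x:{0<..d}|lborel. exp (c * x)) = exp_primitive c d"
    by (rule set_integral_has_integral_nonneg; simp)+
qed

lemma set_integrable_mult_exp_neg:
  fixes c :: real
  assumes c: "c > 0"
  shows "set_integrable lborel {0<..} (\<lambda>x. x * exp (- c * x))"
proof (rule set_integrable_bound)
  show "set_integrable lborel {0<..} (\<lambda>x. 2 / c * exp (- (c / 2) * x))"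
    using set_integral_exp_neg_tail(1)[of "c / 2" 0] c by simp
  show "set_borel_measurable lborel {0<..} (\<lambda>x. x * exp (- c * x))"
    unfolding set_borel_measurable_def by measurable
  show "AE x in lborel. x \<in> {0<..} \<longrightarrow> norm (x * exp (- c * x)) \<le> norm (2 / c * exp (- (c / 2) * x))"
  proof (intro AE_I2 impI)
    fix x :: real assume "x \<in> {0<..}"
    have "c * x / 2 \<le> exp (c * x / 2)"
      using exp_ge_add_one_self[of "c * x / 2"] by linarith
    then have "x * exp (- c * x) \<le> 2 / c * exp (c * x / 2) * exp (- c * x)"
      using c by (intro mult_right_mono) (auto simp: field_simps)
    also have "\<dots> = 2 / c * exp (- (c / 2) * x)"
      by (simp add: mult.assoc exp_add[symmetric])
    finally show "norm (x * exp (- c * x)) \<le> norm (2 / c * exp (- (c / 2) * x))"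
      using \<open>x \<in> {0<..}\<close> c by simp
  qed
qed

section \<open>Superlevel sets of monotone functions and the layer-cake formula\<close>

lemma mono_superlevel_AE_ray:
  fixes J :: "real \<Rightarrow> real"
  assumes J: "mono J" and nonempty: "\<exists>x>0. s < J x"
  obtains t where "\<And>c. (\<And>x. 0 < x \<Longrightarrow> s < J x \<Longrightarrow> c \<le> x) \<Longrightarrow> c \<le> t"
    and "AE x in lborel. (0 < x \<and> s < J x) \<longleftrightarrow> t < x"
proof
  define B where "B = {x. 0 < x \<and> s < J x}"
  have B: "B \<noteq> {}" "bdd_below B"
    using nonempty by (auto simp: B_def intro!: bdd_belowI[of _ 0])
  show "c \<le> Inf B" if "\<And>x. 0 < x \<Longrightarrow> s < J x \<Longrightarrow> c \<le> x" for c
    using that B(1) by (intro cInf_greatest) (auto simp: B_def)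
  have ray: "(0 < x \<and> s < J x) \<longleftrightarrow> Inf B < x" if "x \<noteq> Inf B" for x
  proof
    assume "Inf B < x"
    then obtain b where "b \<in> B" "b < x"
      using cInf_less_iff[OF B] by blast
    then show "0 < x \<and> s < J x"
      using monoD[OF J, of b x] by (auto simp: B_def)
  next
    assume "0 < x \<and> s < J x"
    then have "Inf B \<le> x"
      using B(2) by (intro cInf_lower) (auto simp: B_def)
    with that show "Inf B < x" by simp
  qed
  show "AE x in lborel. (0 < x \<and> s < J x) \<longleftrightarrow> Inf B < x"
    using AE_lborel_singleton[of "Inf B"] by eventually_elim (use ray in auto)
qed

lemma nn_integral_layer_cake:
  fixes g J :: "real \<Rightarrow> real"
  assumes [measurable]: "g \<in> borel_measurable borel" "J \<in> borel_measurable borel"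
    and g: "\<And>x. 0 \<le> g x" and J: "\<And>x. 0 \<le> J x"
  shows "(\<integral>\<^sup>+x. ennreal (g x * J x) \<partial>lborel)
       = (\<integral>\<^sup>+s. indicator {0..} s * (\<integral>\<^sup>+x. ennreal (g x * (if s < J x then 1 else 0)) \<partial>lborel) \<partial>lborel)"
proof -
  define H where "H x s = ennreal (g x * (if 0 \<le> s \<and> s < J x then 1 else 0))" for x s
  have [measurable]: "case_prod H \<in> borel_measurable (lborel \<Otimes>\<^sub>M lborel)"
    unfolding H_def[abs_def] by measurable
  have "(\<integral>\<^sup>+s. H x s \<partial>lborel) = ennreal (g x) * emeasure lborel {0..<J x}" for x
    by (subst nn_integral_cmult_indicator[symmetric])
      (auto intro!: nn_integral_cong simp: H_def indicator_def)
  then have "(\<integral>\<^sup>+x. ennreal (g x * J x) \<partial>lborel) = (\<integral>\<^sup>+x. (\<integral>\<^sup>+s. H x s \<partial>lborel) \<partial>lborel)"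
    using g J by (simp add: ennreal_mult)
  also have "\<dots> = (\<integral>\<^sup>+s. (\<integral>\<^sup>+x. H x s \<partial>lborel) \<partial>lborel)"
    by (rule lborel_pair.Fubini'[symmetric]) measurable
  also have "\<dots> = (\<integral>\<^sup>+s. indicator {0..} s * (\<integral>\<^sup>+x. ennreal (g x * (if s < J x then 1 else 0)) \<partial>lborel) \<partial>lborel)"
    by (intro nn_integral_cong) (simp add: H_def indicator_def)
  finally show ?thesis .
qed

lemma Ic_nonneg: "I \<in> Ic \<Longrightarrow> 0 \<le> x \<Longrightarrow> 0 \<le> I x"
  and Ic_le: "I \<in> Ic \<Longrightarrow> 0 \<le> x \<Longrightarrow> I x \<le> x"
  unfolding Ic_def by force+

lemma Ic_0: "I \<in> Ic \<Longrightarrow> I 0 = 0"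
  using Ic_nonneg[of I 0] Ic_le[of I 0] by simp

lemma Ic_extend_constant:
  assumes "I \<in> Ic"
  shows "(\<lambda>x. I (max 0 x)) \<in> Ic" "mono (\<lambda>x. I (max 0 x))" "\<And>x. 0 \<le> I (max 0 x)"
  using assms by (auto simp: Ic_def intro!: monoI)

lemma Ic_AE_diff_const:
  assumes I: "I \<in> Ic" and J: "J \<in> Ic" and diff: "AE x in lborel. 0 < x \<longrightarrow> I x - J x = c"
  shows "c = 0"
proof (rule ccontr)
  assume "c \<noteq> 0"
  have "AE x in lborel. x \<notin> {0<..<\<bar>c\<bar>}"
    using diff
  proof eventually_elim
    case (elim x)
    show ?case
      using elim Ic_nonneg[OF I, of x] Ic_le[OF I, of x] Ic_nonneg[OF J, of x] Ic_le[OF J, of x]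
      by auto
  qed
  then have "emeasure lborel {0<..<\<bar>c\<bar>} = 0"
    by (subst AE_iff_measurable[symmetric, where P = "\<lambda>x. x \<notin> {0<..<\<bar>c\<bar>}"]) auto
  with \<open>c \<noteq> 0\<close> show False by simp
qed

lemma Ic_superlevel_AE_ray:
  assumes J: "J \<in> Ic" "mono J" and s: "0 \<le> s" and nonempty: "\<exists>x>0. s < J x"
  obtains t where "s \<le> t" "\<And>a. \<forall>x\<in>{0..a}. J x = 0 \<Longrightarrow> a \<le> t"
    "AE x in lborel. indicator {0<..} x * (if s < J x then 1 else 0) = (indicator {t<..} x :: real)"
proof -
  obtain t where glb: "\<And>c. (\<And>x. 0 < x \<Longrightarrow> s < J x \<Longrightarrow> c \<le> x) \<Longrightarrow> c \<le> t"
    and ae: "AE x in lborel. (0 < x \<and> s < J x) \<longleftrightarrow> t < x"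
    using mono_superlevel_AE_ray[OF J(2) nonempty] by blast
  have "s \<le> t"
    using Ic_le[OF J(1)] by (intro glb) (metis less_imp_le order.strict_trans2)
  moreover have "a \<le> t" if "\<forall>x\<in>{0..a}. J x = 0" for a
    using that s by (intro glb) (metis atLeastAtMost_iff less_imp_le not_le order.strict_iff_not)
  moreover have "AE x in lborel. indicator {0<..} x * (if s < J x then 1 else 0) = (indicator {t<..} x :: real)"
    using ae by eventually_elim (auto simp: indicator_def)
  ultimately show ?thesis
    by (rule that)
qed

lemma ExpX_cong:
  assumes "\<And>x. 0 \<le> x \<Longrightarrow> f x = g x"
  shows "ExpX q lam f = ExpX q lam g"
proof -
  have "(LINT x:{0<..}|lborel. q * lam * exp (- lam * x) * f x)
      = (LINT x:{0<..}|lborel. q * lam * exp (- lam * x) * g x)"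
    by (rule set_lebesgue_integral_cong) (auto simp: assms)
  then show ?thesis
    unfolding ExpX_def by (simp add: assms)
qed

lemma ExpX_integrable_cong:
  "(\<And>x. 0 \<le> x \<Longrightarrow> f x = g x) \<Longrightarrow> ExpX_integrable q lam f = ExpX_integrable q lam g"
  unfolding ExpX_integrable_def by (intro set_integrable_cong) auto

lemma ExpX_integrable_const:
  assumes "lam > 0"
  shows "ExpX_integrable q lam (\<lambda>_. c)"
proof -
  have "set_integrable lborel {0<..} (\<lambda>x. exp (- lam * x))"
    by (rule set_integral_exp_neg_tail(1)[OF assms])
  then have "set_integrable lborel {0<..} (\<lambda>x. (q * lam * c) * exp (- lam * x))"
    by simp
  then show ?thesis
    unfolding ExpX_integrable_def by (simp add: mult_ac)
qed

lemma ExpX_integrable_add: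
  "ExpX_integrable q lam f \<Longrightarrow> ExpX_integrable q lam g \<Longrightarrow> ExpX_integrable q lam (\<lambda>x. f x + g x)"
  and ExpX_add:
  "ExpX_integrable q lam f \<Longrightarrow> ExpX_integrable q lam g \<Longrightarrow> ExpX q lam (\<lambda>x. f x + g x) = ExpX q lam f + ExpX q lam g"
  unfolding ExpX_integrable_def ExpX_def distrib_left by (simp_all add: set_integral_add)

lemma ExpX_integrable_diff:
  "ExpX_integrable q lam f \<Longrightarrow> ExpX_integrable q lam g \<Longrightarrow> ExpX_integrable q lam (\<lambda>x. f x - g x)"
  and ExpX_diff:
  "ExpX_integrable q lam f \<Longrightarrow> ExpX_integrable q lam g \<Longrightarrow> ExpX q lam (\<lambda>x. f x - g x) = ExpX q lam f - ExpX q lam g"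
  unfolding ExpX_integrable_def ExpX_def right_diff_distrib by (simp_all add: set_integral_diff)

lemma ExpX_integrable_cmult:
  "ExpX_integrable q lam f \<Longrightarrow> ExpX_integrable q lam (\<lambda>x. c * f x)"
  and ExpX_cmult: "ExpX q lam (\<lambda>x. c * f x) = c * ExpX q lam f"
  unfolding ExpX_integrable_def ExpX_def mult.left_commute[of _ c] by (simp_all add: distrib_left)

lemma ExpX_nonneg:
  assumes "0 \<le> q" "q \<le> 1" "0 \<le> lam" and f: "\<And>x. 0 \<le> x \<Longrightarrow> 0 \<le> f x"
  shows "0 \<le> ExpX q lam f"
proof -
  have "0 \<le> (LINT x:{0<..}|lborel. q * lam * exp (- lam * x) * f x)"
    unfolding set_lebesgue_integral_def
    using assms by (intro integral_nonneg_AE AE_I2) (simp add: indicator_def)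
  then show ?thesis
    unfolding ExpX_def using assms by simp
qed

lemma ExpX_eq_0_imp_AE:
  assumes q: "0 < q" "q \<le> 1" and lam: "0 < lam" and f: "\<And>x. 0 \<le> x \<Longrightarrow> 0 \<le> f x"
    and int: "ExpX_integrable q lam f" and zero: "ExpX q lam f = 0"
  shows "AE x in lborel. 0 < x \<longrightarrow> f x = 0"
proof -
  let ?g = "\<lambda>x. indicator {0<..} x * (q * lam * exp (- lam * x) * f x)"
  have nonneg: "0 \<le> ?g x" for x
    using q lam f[of x] by (simp add: indicator_def)
  have "0 \<le> (1 - q) * f 0" "0 \<le> integral\<^sup>L lborel ?g"
    using q f[of 0] nonneg by (auto intro: integral_nonneg_AE)
  with zero have "integral\<^sup>L lborel ?g = 0"
    unfolding ExpX_def set_lebesgue_integral_def by simp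
  then have "AE x in lborel. ?g x = 0"
    using int nonneg unfolding ExpX_integrable_def set_integrable_def
    by (subst integral_nonneg_eq_0_iff_AE[symmetric]) auto
  then show ?thesis
    by eventually_elim (use q lam in \<open>auto simp: indicator_def\<close>)
qed

lemma survI_cong:
  assumes "\<And>x. 0 \<le> x \<Longrightarrow> I x = J x"
  shows "survI q lam I = survI q lam J"
  unfolding survI_def by (intro ext ExpX_cong) (simp add: assms)

lemma premium_cong:
  assumes "\<And>x. 0 \<le> x \<Longrightarrow> I x = J x"
  shows "premium \<theta> \<alpha> q lam I = premium \<theta> \<alpha> q lam J"
  using survI_cong[OF assms] unfolding premium_def by simp

lemma survI_measurable [measurable]:
  assumes [measurable]: "J \<in> borel_measurable borel"
  shows "survI q lam J \<in> borel_measurable borel"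
  unfolding survI_def[abs_def] ExpX_def set_lebesgue_integral_def by measurable

definition final_wealth :: "real \<Rightarrow> real \<Rightarrow> real \<Rightarrow> real \<Rightarrow> real \<Rightarrow> (real \<Rightarrow> real) \<Rightarrow> real \<Rightarrow> real" where
  "final_wealth w \<theta> \<alpha> q lam I x = w - x + I x - premium \<theta> \<alpha> q lam I"

lemma EU_eq_ExpX: "EU u w \<theta> \<alpha> q lam I = ExpX q lam (\<lambda>x. u (final_wealth w \<theta> \<alpha> q lam I x))"
  by (simp add: EU_def final_wealth_def)

lemma EU_integrable_iff:
  "EU_integrable u w \<theta> \<alpha> q lam I \<longleftrightarrow> ExpX_integrable q lam (\<lambda>x. u (final_wealth w \<theta> \<alpha> q lam I x))"
  by (simp add: EU_integrable_def final_wealth_def)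

definition cara_gap :: "real \<Rightarrow> real \<Rightarrow> real \<Rightarrow> real" where
  "cara_gap \<gamma> a b = exp (- \<gamma> * a) / \<gamma> * (exp (- \<gamma> * (b - a)) - 1 + \<gamma> * (b - a))"

lemma cara_gap_nonneg: "\<gamma> > 0 \<Longrightarrow> 0 \<le> cara_gap \<gamma> a b"
  unfolding cara_gap_def using exp_ge_add_one_self[of "- \<gamma> * (b - a)"] by simp

lemma cara_gap_eq_0_iff:
  assumes "\<gamma> > 0"
  shows "cara_gap \<gamma> a b = 0 \<longleftrightarrow> b = a"
proof
  assume "cara_gap \<gamma> a b = 0"
  then have "\<not> 1 - \<gamma> * (b - a) < exp (- (\<gamma> * (b - a)))"
    using assms by (simp add: cara_gap_def)
  then show "b = a"
    using exp_minus_greater[of "\<gamma> * (b - a)"] assms by auto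
qed (simp add: cara_gap_def)

lemma cara_utility_expansion:
  fixes u :: "real \<Rightarrow> real"
  assumes \<gamma>: "\<gamma> > 0" and u: "\<And>x. (u has_real_derivative exp (- \<gamma> * x)) (at x)"
  shows "u b = u a + exp (- \<gamma> * a) * (b - a) - cara_gap \<gamma> a b"
proof -
  define v where "v y = u y + exp (- \<gamma> * y) / \<gamma>" for y
  have "(v has_real_derivative 0) (at y)" for y
    unfolding v_def[abs_def] using \<gamma>
    by (auto intro!: derivative_eq_intros u)
  then have "v b = v a"
    by (metis DERIV_isconst_all)
  moreover have "exp (- \<gamma> * b) = exp (- \<gamma> * a) * exp (- \<gamma> * (b - a))"
    by (simp add: exp_add[symmetric] algebra_simps)
  ultimately show ?thesis
    using \<gamma> by (simp add: v_def cara_gap_def field_simps)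
qed

lemma cara_utility_eq:
  fixes u :: "real \<Rightarrow> real"
  assumes "\<gamma> > 0" "\<And>x. (u has_real_derivative exp (- \<gamma> * x)) (at x)"
  shows "u b = u 0 + (1 - exp (- \<gamma> * b)) / \<gamma>"
  using cara_utility_expansion[OF assms, of b 0] assms(1) by (simp add: cara_gap_def field_simps)

section \<open>The equation for the deductible\<close>

locale exp_loss_model =
  fixes q lam \<gamma> \<theta> \<alpha> :: real
  assumes q_pos: "0 < q" and q_le_1: "q \<le> 1" and lam_pos: "0 < lam" and gamma_pos: "0 < \<gamma>"
    and theta_nonneg: "0 \<le> \<theta>" and alpha_nonneg: "0 \<le> \<alpha>"
    and risk_aversion_large: "\<gamma> * ((1 + \<theta>) + \<alpha> * (1 - 2 * q)) > 2 * \<alpha> * q * lam"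
begin

abbreviation kt :: "real \<Rightarrow> real" where "kt \<equiv> ktilde \<theta> \<alpha>"

definition kt' :: "real \<Rightarrow> real" where "kt' p = 1 + \<theta> + \<alpha> * (1 - 2 * p)"

definition surv :: "real \<Rightarrow> real" where "surv x = q * exp (- lam * x)"

definition kS :: "real \<Rightarrow> real" where "kS x = kt' (surv x)"

lemma kS_eq: "kS x = 1 + \<theta> + \<alpha> * (1 - 2 * q * exp (- lam * x))"
  by (simp add: kS_def kt'_def surv_def)

lemma kt_has_real_derivative: "(kt has_real_derivative kt' p) (at p)"
  unfolding ktilde_def[abs_def] kt'_def by (auto intro!: derivative_eq_intros simp: algebra_simps)

lemma surv_has_real_derivative: "(surv has_real_derivative - lam * surv x) (at x)"
  unfolding surv_def[abs_def] by (auto intro!: derivative_eq_intros)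

lemma kS_has_real_derivative: "(kS has_real_derivative 2 * \<alpha> * lam * surv x) (at x)"
  unfolding kS_def[abs_def] kt'_def
  by (auto intro!: derivative_eq_intros surv_has_real_derivative)

lemma surv_0 [simp]: "surv 0 = q"
  by (simp add: surv_def)

lemma surv_pos: "0 < surv x"
  using q_pos by (simp add: surv_def)

lemma surv_le_q: "0 \<le> x \<Longrightarrow> surv x \<le> q"
  using q_pos lam_pos by (simp add: surv_def mult_left_le)

lemma surv_strict_antimono: "x < y \<Longrightarrow> surv y < surv x"
  using q_pos lam_pos by (simp add: surv_def)

lemma kt'_q_pos: "0 < kt' q"
proof -
  have "0 < \<gamma> * kt' q"
    using risk_aversion_large alpha_nonneg q_pos lam_pos unfolding kt'_def
    by (smt (verit) mult_nonneg_nonneg)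
  then show ?thesis
    using gamma_pos by (simp add: zero_less_mult_iff)
qed

lemma kS_ge: "0 \<le> x \<Longrightarrow> kt' q \<le> kS x"
  using surv_le_q[of x] alpha_nonneg by (simp add: kS_def kt'_def mult_left_mono)

lemma kS_pos: "0 \<le> x \<Longrightarrow> 0 < kS x"
  using kS_ge kt'_q_pos by fastforce

lemma kS_le: "kS x \<le> 1 + \<theta> + \<alpha>"
proof -
  have "0 \<le> \<alpha> * surv x"
    using surv_pos[of x] alpha_nonneg by simp
  then show ?thesis
    by (simp add: kS_def kt'_def algebra_simps)
qed

lemma kS_mono: "x \<le> y \<Longrightarrow> kS x \<le> kS y"
  using surv_strict_antimono[of x y] alpha_nonneg
  by (cases "x = y") (auto simp: kS_def kt'_def mult_left_mono)

text \<open>This is where the hypothesis on \<open>\<gamma>\<close> enters: it makes \<open>ell\<close> and \<open>mu\<close> below increasing.\<close>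

lemma kS_derivative_less: "0 \<le> x \<Longrightarrow> 2 * \<alpha> * lam * surv x < \<gamma> * kS x"
proof -
  assume "0 \<le> x"
  have "2 * \<alpha> * (\<gamma> + lam) * surv x \<le> 2 * \<alpha> * (\<gamma> + lam) * q"
    using surv_le_q[OF \<open>0 \<le> x\<close>] alpha_nonneg gamma_pos lam_pos by (intro mult_left_mono) auto
  then show ?thesis
    using risk_aversion_large by (simp add: kS_def kt'_def algebra_simps)
qed

lemma kt_0 [simp]: "kt 0 = 0"
  by (simp add: ktilde_def)

lemma kt_nonneg: "0 \<le> p \<Longrightarrow> p \<le> 1 \<Longrightarrow> 0 \<le> kt p"
  using theta_nonneg alpha_nonneg by (simp add: ktilde_def power2_eq_square mult_left_le)

lemma kt_le_linear: "0 \<le> p \<Longrightarrow> kt p \<le> (1 + \<theta> + \<alpha>) * p"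
  using alpha_nonneg by (simp add: ktilde_def algebra_simps power2_eq_square)

lemma kt_strict_mono: "0 \<le> p \<Longrightarrow> p < p' \<Longrightarrow> p' \<le> q \<Longrightarrow> kt p < kt p'"
proof -
  assume p: "0 \<le> p" "p < p'" "p' \<le> q"
  have "\<alpha> * (p + p') \<le> \<alpha> * (2 * q)"
    using p alpha_nonneg by (intro mult_left_mono) auto
  then have "0 < (1 + \<theta> + \<alpha>) - \<alpha> * (p + p')"
    using kt'_q_pos by (simp add: kt'_def algebra_simps)
  then have "0 < (p' - p) * ((1 + \<theta> + \<alpha>) - \<alpha> * (p + p'))"
    using p by simp
  also have "\<dots> = kt p' - kt p"
    by (simp add: ktilde_def algebra_simps power2_eq_square)
  finally show ?thesis by simp
qed

lemma kt_surv_strict_antimono: "0 \<le> x \<Longrightarrow> x < y \<Longrightarrow> kt (surv y) < kt (surv x)"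
  using kt_strict_mono surv_pos surv_strict_antimono surv_le_q by (simp add: less_imp_le)

lemma kt_surv_eq: "kt (surv x) = surv x * kS x + \<alpha> * (surv x)\<^sup>2"
  by (simp add: ktilde_def kS_def kt'_def algebra_simps power2_eq_square)

definition ell :: "real \<Rightarrow> real" where "ell x = x - ln (kS x) / \<gamma>"

lemma ell_mono:
  assumes "0 \<le> x" "x \<le> y"
  shows "ell x \<le> ell y"
proof (rule DERIV_nonneg_imp_nondecreasing[OF \<open>x \<le> y\<close>])
  fix t assume "x \<le> t"
  then have "0 \<le> t" using assms by simp
  have "(ell has_real_derivative 1 - 2 * \<alpha> * lam * surv t / kS t / \<gamma>) (at t)"
    unfolding ell_def[abs_def] using kS_pos[OF \<open>0 \<le> t\<close>] gamma_pos
    by (auto intro!: derivative_eq_intros kS_has_real_derivative)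
  moreover have "2 * \<alpha> * lam * surv t / kS t / \<gamma> \<le> 1"
    using kS_derivative_less[OF \<open>0 \<le> t\<close>] kS_pos[OF \<open>0 \<le> t\<close>] gamma_pos by (simp add: field_simps)
  ultimately show "\<exists>y. (ell has_real_derivative y) (at t) \<and> 0 \<le> y"
    by auto
qed

lemma ell_Lipschitz: "0 \<le> x \<Longrightarrow> x \<le> y \<Longrightarrow> ell y - ell x \<le> y - x"
  using kS_mono[of x y] kS_pos[of x] gamma_pos by (simp add: ell_def divide_right_mono)

definition mu :: "real \<Rightarrow> real" where "mu d = exp (\<gamma> * d) / kS d"

definition mu' :: "real \<Rightarrow> real" where
  "mu' d = exp (\<gamma> * d) * (\<gamma> * kS d - 2 * \<alpha> * lam * surv d) / (kS d)\<^sup>2"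

lemma mu_pos: "0 \<le> d \<Longrightarrow> 0 < mu d"
  using kS_pos by (simp add: mu_def)

lemma mu'_pos:
  assumes "0 \<le> d"
  shows "0 < mu' d"
proof -
  have "0 < \<gamma> * kS d - 2 * \<alpha> * lam * surv d"
    using kS_derivative_less[OF assms] by simp
  then show ?thesis
    using kS_pos[OF assms] by (simp add: mu'_def)
qed

lemma mu_eq_exp_ell: "0 \<le> x \<Longrightarrow> mu x = exp (\<gamma> * ell x)"
  using kS_pos[of x] gamma_pos by (simp add: mu_def ell_def right_diff_distrib exp_diff)

lemma mu_has_real_derivative: "0 \<le> d \<Longrightarrow> (mu has_real_derivative mu' d) (at d)"
  unfolding mu_def[abs_def] mu'_def using kS_pos[of d]
  by (auto intro!: derivative_eq_intros kS_has_real_derivative simp: field_simps power2_eq_square)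

lemma mu_at_top: "filterlim mu at_top at_top"
proof (rule filterlim_at_top_mono)
  have "filterlim (\<lambda>d. \<gamma> * d) at_top at_top"
    by (rule filterlim_tendsto_pos_mult_at_top[OF tendsto_const gamma_pos filterlim_ident])
  then have "filterlim (\<lambda>d. exp (\<gamma> * d)) at_top at_top"
    by (rule filterlim_compose[OF exp_at_top])
  then show "filterlim (\<lambda>d. exp (\<gamma> * d) / (1 + \<theta> + \<alpha>)) at_top at_top"
    unfolding divide_inverse using theta_nonneg alpha_nonneg
    by (intro filterlim_at_top_mult_tendsto_pos[OF tendsto_const]) auto
  show "eventually (\<lambda>d. exp (\<gamma> * d) / (1 + \<theta> + \<alpha>) \<le> mu d) at_top"
    using eventually_ge_at_top[of 0]
  proof eventually_elim
    case (elim d)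
    then show ?case
      unfolding mu_def using kS_pos[of d] kS_le[of d] by (intro divide_left_mono) auto
  qed
qed

text \<open>\<open>Phi d\<close> is \<open>E[h(X)] - mu d\<close> for the marginal-utility ratio \<open>h\<close> of the contract with
  deductible \<open>d\<close> (cf. \<open>ExpX_h\<close>); the equation for \<open>d*\<close> is \<open>Phi d = 0\<close>.\<close>

definition Phi :: "real \<Rightarrow> real" where
  "Phi d = (1 - q) + q * lam * exp_primitive (\<gamma> - lam) d + mu d * (kt (surv d) - 1)"

lemma Phi_has_real_derivative:
  assumes "0 \<le> d"
  shows "(Phi has_real_derivative mu' d * (kt (surv d) - 1)) (at d)"
proof -
  have "(Phi has_real_derivative q * lam * exp ((\<gamma> - lam) * d)
          + (mu' d * (kt (surv d) - 1) + mu d * (kt' (surv d) * (- lam * surv d)))) (at d)"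
    unfolding Phi_def[abs_def]
    by (auto intro!: derivative_eq_intros exp_primitive_has_real_derivative mu_has_real_derivative[OF assms]
        DERIV_chain2[OF kt_has_real_derivative surv_has_real_derivative])
  moreover have "mu d * kt' (surv d) * surv d = q * exp ((\<gamma> - lam) * d)"
    using kS_pos[OF assms]
    by (simp add: mu_def kS_def surv_def left_diff_distrib exp_diff exp_minus field_simps)
  ultimately show ?thesis
    by (simp add: algebra_simps)
qed

lemma Phi_continuous_on: "continuous_on {0..} Phi"
  by (rule continuous_at_imp_continuous_on) (auto intro: DERIV_isCont Phi_has_real_derivative)

lemma Phi_0: "Phi 0 * kS 0 = \<theta> + \<alpha> * (1 - q)\<^sup>2"
  using kS_pos[of 0]
  by (simp add: Phi_def mu_def kS_def kt'_def ktilde_def field_simps power2_eq_square)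

lemma Phi_0_nonneg: "0 \<le> Phi 0"
  using Phi_0 kS_pos[of 0] theta_nonneg alpha_nonneg
  by (metis zero_le_mult_iff zero_le_power2 add_nonneg_nonneg linorder_not_less order_refl)

lemma Phi_0_eq_0_iff: "Phi 0 = 0 \<longleftrightarrow> \<theta> = 0 \<and> (\<alpha> = 0 \<or> q = 1)"
proof -
  have "kS 0 \<noteq> 0"
    using kS_pos[of 0] by simp
  then have "Phi 0 = 0 \<longleftrightarrow> \<theta> + \<alpha> * (1 - q)\<^sup>2 = 0"
    using Phi_0 by (metis mult_eq_0_iff)
  also have "\<dots> \<longleftrightarrow> \<theta> = 0 \<and> (\<alpha> = 0 \<or> q = 1)"
    using theta_nonneg alpha_nonneg by (auto simp: add_nonneg_eq_0_iff)
  finally show ?thesis .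
qed

lemma kt_surv_eventually_le_half:
  obtains d\<^sub>1 where "0 \<le> d\<^sub>1" "\<And>d. d\<^sub>1 \<le> d \<Longrightarrow> kt (surv d) \<le> 1 / 2"
proof
  define c where "c = 1 + \<theta> + \<alpha>"
  have c: "1 \<le> c"
    using theta_nonneg alpha_nonneg by (simp add: c_def)
  show "0 \<le> ln (2 * c) / lam"
    using c lam_pos by simp
  fix d assume "ln (2 * c) / lam \<le> d"
  then have "ln (2 * c) \<le> lam * d"
    using lam_pos by (simp add: field_simps)
  then have "2 * c \<le> exp (lam * d)"
    using c by (metis exp_ln exp_le_cancel_iff mult_pos_pos zero_less_numeral order_less_le_trans zero_less_one)
  then have "2 * c * surv d \<le> q"
    using q_pos by (simp add: surv_def exp_minus field_simps)
  then have "c * surv d \<le> 1 / 2"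
    using q_le_1 by simp
  then show "kt (surv d) \<le> 1 / 2"
    using kt_le_linear[OF less_imp_le[OF surv_pos[of d]]] unfolding c_def by linarith
qed

lemma Phi_eventually_neg: "\<exists>D\<ge>0. Phi D < 0"
proof -
  obtain d\<^sub>1 where d\<^sub>1: "0 \<le> d\<^sub>1" "\<And>d. d\<^sub>1 \<le> d \<Longrightarrow> kt (surv d) \<le> 1 / 2"
    using kt_surv_eventually_le_half by blast
  have decay: "Phi D + mu D / 2 \<le> Phi d\<^sub>1 + mu d\<^sub>1 / 2" if "d\<^sub>1 \<le> D" for D
  proof (rule DERIV_nonpos_imp_nonincreasing[where f = "\<lambda>d. Phi d + mu d / 2", OF that])
    fix t assume "d\<^sub>1 \<le> t"
    then have "0 \<le> t" using d\<^sub>1(1) by simp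
    have "((\<lambda>d. Phi d + mu d / 2) has_real_derivative mu' t * (kt (surv t) - 1 / 2)) (at t)"
      by (auto intro!: derivative_eq_intros Phi_has_real_derivative mu_has_real_derivative \<open>0 \<le> t\<close>
          simp: algebra_simps)
    moreover have "mu' t * (kt (surv t) - 1 / 2) \<le> 0"
      using d\<^sub>1(2)[OF \<open>d\<^sub>1 \<le> t\<close>] mu'_pos[OF \<open>0 \<le> t\<close>] by (simp add: mult_nonneg_nonpos)
    ultimately show "\<exists>y. ((\<lambda>d. Phi d + mu d / 2) has_real_derivative y) (at t) \<and> y \<le> 0"
      by blast
  qed
  obtain N where N: "\<And>D. N \<le> D \<Longrightarrow> 2 * Phi d\<^sub>1 + mu d\<^sub>1 + 1 \<le> mu D"
    using mu_at_top unfolding filterlim_at_top eventually_at_top_linorder by blast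
  define D where "D = max N d\<^sub>1"
  have "Phi D \<le> Phi d\<^sub>1 + mu d\<^sub>1 / 2 - mu D / 2"
    using decay[of D] by (simp add: D_def)
  also have "\<dots> < 0"
    using N[of D] by (simp add: D_def)
  finally show ?thesis
    using d\<^sub>1(1) by (intro exI[of _ D]) (simp add: D_def)
qed

lemma Phi_root_exists: "\<exists>d\<ge>0. Phi d = 0"
proof -
  obtain D where "0 \<le> D" "Phi D < 0"
    using Phi_eventually_neg by blast
  moreover have "continuous_on {0..D} Phi"
    using Phi_continuous_on by (rule continuous_on_subset) auto
  ultimately show ?thesis
    using IVT2'[of Phi D 0 0] Phi_0_nonneg by fastforce
qed

lemma Phi_strict_antimono_from:
  assumes "0 \<le> a" "kt (surv a) \<le> 1" "a < b"
  shows "Phi b < Phi a"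
proof (rule DERIV_neg_imp_decreasing_open[where f = Phi, OF \<open>a < b\<close>])
  fix t assume "a < t" "t < b"
  then have "kt (surv t) < 1" "0 \<le> t"
    using kt_surv_strict_antimono[OF \<open>0 \<le> a\<close>, of t] assms by auto
  then show "\<exists>y. (Phi has_real_derivative y) (at t) \<and> y < 0"
    using Phi_has_real_derivative mu'_pos by (metis mult_pos_neg diff_less_0_iff_less)
next
  show "continuous_on {a..b} Phi"
    using Phi_continuous_on by (rule continuous_on_subset) (use assms in auto)
qed

text \<open>Otherwise \<open>Phi\<close> would be strictly increasing on \<open>[0, a]\<close>, contradicting \<open>0 \<le> Phi 0\<close>.\<close>

lemma Phi_root_kt_surv_le_1:
  assumes "0 \<le> a" "Phi a = 0"
  shows "kt (surv a) \<le> 1"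
proof (rule ccontr)
  assume gt: "\<not> kt (surv a) \<le> 1"
  show False
  proof (cases "a = 0")
    case True
    then have "\<theta> = 0 \<and> (\<alpha> = 0 \<or> q = 1)"
      using assms Phi_0_eq_0_iff by simp
    then have "kt q \<le> 1"
      using q_pos q_le_1 by (auto simp: ktilde_def power2_eq_square)
    with gt True show False by simp
  next
    case False
    have "Phi 0 < Phi a"
    proof (rule DERIV_pos_imp_increasing_open[where f = Phi])
      show "0 < a" using assms False by simp
      fix t assume "0 < t" "t < a"
      then have "1 < kt (surv t)"
        using kt_surv_strict_antimono[of t a] gt by simp
      then show "\<exists>y. (Phi has_real_derivative y) (at t) \<and> 0 < y"
        using Phi_has_real_derivative mu'_pos \<open>0 < t\<close> by (metis less_eq_real_def mult_pos_pos diff_gt_0_iff_gt)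
    next
      show "continuous_on {0..a} Phi"
        using Phi_continuous_on by (rule continuous_on_subset) auto
    qed
    with assms Phi_0_nonneg show False by simp
  qed
qed

lemma Phi_root_unique:
  assumes "0 \<le> a" "Phi a = 0" "0 \<le> b" "Phi b = 0"
  shows "a = b"
  using Phi_strict_antimono_from[of a b] Phi_strict_antimono_from[of b a]
    Phi_root_kt_surv_le_1 assms
  by (cases a b rule: linorder_cases) auto

lemma Phi_root_pos_iff:
  assumes "0 \<le> d" "Phi d = 0"
  shows "0 < d \<longleftrightarrow> 0 < \<theta> \<or> (q < 1 \<and> 0 < \<alpha>)"
proof -
  have "d = 0 \<longleftrightarrow> Phi 0 = 0"
    using assms Phi_root_unique[of d 0] by auto
  then show ?thesis
    using assms(1) Phi_0_eq_0_iff theta_nonneg alpha_nonneg q_le_1 by auto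
qed

lemma Phi_eq_exp:
  "Phi d = (1 - q) + q * lam * exp_primitive (\<gamma> - lam) d
     + exp (\<gamma> * d) / kS d * (q * exp (- lam * d) * kS d + \<alpha> * (q * exp (- lam * d))\<^sup>2 - 1)"
  unfolding Phi_def mu_def kt_surv_eq by (simp add: surv_def)

lemma dstar_eq_sides_diff:
  assumes "0 \<le> d" "lam \<noteq> \<gamma>"
  shows "exp (\<gamma> * d) * (1 - \<alpha> * q\<^sup>2 * exp (- 2 * lam * d)) / kS d
      - (1 + q * \<gamma> * (exp ((\<gamma> - lam) * d) - 1) / (\<gamma> - lam)) = - Phi d"
proof -
  define X E where "X = exp (\<gamma> * d)" and "E = exp (- lam * d)"
  have "exp ((\<gamma> - lam) * d) = X * E"
    by (simp add: X_def E_def left_diff_distrib exp_diff exp_minus field_simps)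
  moreover have "exp (- 2 * lam * d) = E\<^sup>2"
    by (simp add: E_def power2_eq_square exp_add[symmetric])
  ultimately show ?thesis
    unfolding Phi_eq_exp exp_primitive_def X_def[symmetric] E_def[symmetric]
    using assms(2) kS_pos[OF assms(1)] by (simp add: field_simps power2_eq_square)
qed

lemma Phi_eq_critical:
  assumes "0 \<le> d" "lam = \<gamma>"
  shows "Phi d = ((1 + q * lam * d) * kS d + \<alpha> * q\<^sup>2 * exp (- lam * d) - exp (lam * d)) / kS d"
proof -
  define X E where "X = exp (lam * d)" and "E = exp (- lam * d)"
  have "X * (q * E * kS d + \<alpha> * (q * E)\<^sup>2) = (X * E) * (q * kS d + \<alpha> * q\<^sup>2 * E)"
    by (simp add: algebra_simps power2_eq_square)
  also have "\<dots> = q * kS d + \<alpha> * q\<^sup>2 * E"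
    by (simp add: X_def E_def exp_add[symmetric])
  finally have XE: "X * (q * E * kS d + \<alpha> * (q * E)\<^sup>2) = q * kS d + \<alpha> * q\<^sup>2 * E" .
  have "Phi d = (1 - q) + q * lam * d + X / kS d * (q * E * kS d + \<alpha> * (q * E)\<^sup>2 - 1)"
    using Phi_eq_exp[of d] assms(2) by (simp add: exp_primitive_def X_def E_def)
  then show ?thesis
    using XE kS_pos[OF assms(1)] unfolding X_def[symmetric] E_def[symmetric]
    by (simp add: field_simps)
qed

lemma dstar_eq_iff_Phi:
  assumes "0 \<le> d"
  shows "dstar_eq \<theta> \<alpha> q lam \<gamma> d \<longleftrightarrow> Phi d = 0"
proof (cases "lam = \<gamma>")
  case True
  then show ?thesis
    unfolding dstar_eq_def kS_eq[symmetric] Phi_eq_critical[OF assms True]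
    using kS_pos[OF assms] by auto
next
  case False
  then show ?thesis
    unfolding dstar_eq_def kS_eq[symmetric] using dstar_eq_sides_diff[OF assms] by auto
qed

end

section \<open>Optimality of the deductible contract\<close>

context exp_loss_model
begin

definition dens :: "real \<Rightarrow> real" where "dens x = q * lam * exp (- lam * x)"

lemma dens_pos: "0 < dens x"
  using q_pos lam_pos by (simp add: dens_def)

lemma dens_measurable [measurable]: "dens \<in> borel_measurable borel"
  unfolding dens_def[abs_def] by measurable

lemma ExpX_dens: "ExpX q lam f = (1 - q) * f 0 + (LINT x:{0<..}|lborel. dens x * f x)"
  by (simp add: ExpX_def dens_def)

lemma ExpX_integrable_dens: "ExpX_integrable q lam f \<longleftrightarrow> set_integrable lborel {0<..} (\<lambda>x. dens x * f x)"
  by (simp add: ExpX_integrable_def dens_def)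

lemma set_integral_dens_tail:
  "set_integrable lborel {t<..} dens" "(LINT x:{t<..}|lborel. dens x) = surv t"
proof -
  have "dens = (\<lambda>x. (q * lam) * exp (- lam * x))"
    by (simp add: dens_def[abs_def])
  then show "set_integrable lborel {t<..} dens" "(LINT x:{t<..}|lborel. dens x) = surv t"
    using set_integral_exp_neg_tail[OF lam_pos, of t] lam_pos by (simp_all add: surv_def)
qed

lemma set_integral_dens_kS_tail:
  "set_integrable lborel {t<..} (\<lambda>x. dens x * kS x)"
  "(LINT x:{t<..}|lborel. dens x * kS x) = kt (surv t)"
proof -
  have expand: "dens x * kS x = (q * lam * (1 + \<theta> + \<alpha>)) * exp (- lam * x)
      - (2 * \<alpha> * q\<^sup>2 * lam) * exp (- (2 * lam) * x)" for x
    by (simp add: dens_def kS_def kt'_def surv_def algebra_simps power2_eq_square exp_add[symmetric])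
  note tail1 = set_integral_exp_neg_tail[OF lam_pos, of t]
    and tail2 = set_integral_exp_neg_tail[of "2 * lam" t]
  show "set_integrable lborel {t<..} (\<lambda>x. dens x * kS x)"
    unfolding expand using tail1 tail2 lam_pos by simp
  have "(LINT x:{t<..}|lborel. dens x * kS x)
      = q * lam * (1 + \<theta> + \<alpha>) * (exp (- lam * t) / lam) - 2 * \<alpha> * q\<^sup>2 * lam * (exp (- (2 * lam) * t) / (2 * lam))"
    unfolding expand using tail1 tail2 lam_pos by simp
  also have "\<dots> = kt (surv t)"
    using lam_pos by (simp add: ktilde_def surv_def field_simps power2_eq_square exp_add[symmetric])
  finally show "(LINT x:{t<..}|lborel. dens x * kS x) = kt (surv t)" .
qed

lemma set_integral_dens_exp_initial:
  assumes "0 \<le> d"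
  shows "set_integrable lborel {0<..d} (\<lambda>x. dens x * exp (\<gamma> * x))"
    "(LINT x:{0<..d}|lborel. dens x * exp (\<gamma> * x)) = q * lam * exp_primitive (\<gamma> - lam) d"
proof -
  have "dens x * exp (\<gamma> * x) = q * lam * exp ((\<gamma> - lam) * x)" for x
    by (simp add: dens_def exp_add[symmetric] algebra_simps)
  then show "set_integrable lborel {0<..d} (\<lambda>x. dens x * exp (\<gamma> * x))"
    "(LINT x:{0<..d}|lborel. dens x * exp (\<gamma> * x)) = q * lam * exp_primitive (\<gamma> - lam) d"
    using set_integral_exp_initial[OF assms, of "\<gamma> - lam"] by simp_all
qed

lemma set_integrable_mult_dens: "set_integrable lborel {0<..} (\<lambda>x. x * dens x)"
proof -
  have "(\<lambda>x. x * dens x) = (\<lambda>x. (q * lam) * (x * exp (- lam * x)))"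
    by (auto simp: dens_def)
  then show ?thesis
    using set_integrable_mult_exp_neg[OF lam_pos] by simp
qed

end

locale optimal_deductible = exp_loss_model +
  fixes d :: real
  assumes d_nonneg: "0 \<le> d" and Phi_d: "Phi d = 0"
begin

abbreviation Ist :: "real \<Rightarrow> real" where "Ist \<equiv> Istar \<theta> \<alpha> q lam \<gamma> d"

lemma Ist_le_d: "x \<le> d \<Longrightarrow> Ist x = 0"
  by (simp add: Istar_def)

lemma Ist_gt_d: "d < x \<Longrightarrow> Ist x = ell x - ell d"
proof -
  assume "d < x"
  then have "0 \<le> x" using d_nonneg by simp
  have "ln (kS x / kS d) = ln (kS x) - ln (kS d)"
    using kS_pos[OF \<open>0 \<le> x\<close>] kS_pos[OF d_nonneg] by (simp add: ln_div)
  then show ?thesis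
    using \<open>d < x\<close> unfolding Istar_def kS_eq[symmetric] by (simp add: ell_def diff_divide_distrib)
qed

lemma Ist_eq_max:
  assumes "0 \<le> x"
  shows "Ist x = max 0 (ell x - ell d)"
proof (cases "x \<le> d")
  case True
  then show ?thesis using Ist_le_d ell_mono[OF assms True] by simp
next
  case False
  then show ?thesis using Ist_gt_d ell_mono[OF d_nonneg, of x] by simp
qed

lemma Ist_mono: "mono Ist"
proof (rule monoI)
  fix x y :: real assume "x \<le> y"
  consider "y \<le> d" | "x \<le> d" "d < y" | "d < x" by linarith
  then show "Ist x \<le> Ist y"
  proof cases
    case 1
    then show ?thesis using Ist_le_d \<open>x \<le> y\<close> by simp
  next
    case 2
    then show ?thesis using Ist_le_d Ist_gt_d ell_mono[OF d_nonneg, of y] by simp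
  next
    case 3
    then show ?thesis using Ist_gt_d \<open>x \<le> y\<close> ell_mono[of x y] d_nonneg by simp
  qed
qed

lemma Ist_nonneg: "0 \<le> Ist x"
  using monoD[OF Ist_mono, of "min x 0" x] Ist_le_d[of "min x 0"] d_nonneg
  by (cases "x \<le> 0") auto

lemma Ist_in_Ic: "Ist \<in> Ic"
  unfolding Ic_def
proof safe
  fix x y :: real assume "0 \<le> y" "y \<le> x"
  have "max 0 (ell x - ell d) - max 0 (ell y - ell d) \<le> max 0 (ell x - ell y)"
    by simp
  also have "\<dots> \<le> x - y"
    using ell_Lipschitz[OF \<open>0 \<le> y\<close> \<open>y \<le> x\<close>] \<open>y \<le> x\<close> by simp
  finally show "Ist x - Ist y \<le> x - y"
    using Ist_eq_max \<open>0 \<le> y\<close> \<open>y \<le> x\<close> by simp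
  show "0 \<le> Ist x - Ist y"
    using monoD[OF Ist_mono \<open>y \<le> x\<close>] by simp
next
  fix x :: real assume "0 \<le> x"
  show "0 \<le> Ist x" by (rule Ist_nonneg)
  show "Ist x \<le> x"
    using Ist_eq_max[OF \<open>0 \<le> x\<close>] ell_Lipschitz[OF d_nonneg, of x] ell_mono[of x d]
      \<open>0 \<le> x\<close> d_nonneg by (cases "d \<le> x") auto
qed

lemma Ist_measurable [measurable]: "Ist \<in> borel_measurable borel"
  by (rule borel_measurable_mono[OF Ist_mono])

text \<open>\<open>h x\<close> is the marginal utility of the final wealth under \<open>Ist\<close>, up to a constant factor.\<close>

definition h :: "real \<Rightarrow> real" where "h x = exp (\<gamma> * (x - Ist x))"

lemma h_pos: "0 < h x"
  by (simp add: h_def)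

lemma h_measurable [measurable]: "h \<in> borel_measurable borel"
  unfolding h_def[abs_def] by measurable

lemma h_le_d: "x \<le> d \<Longrightarrow> h x = exp (\<gamma> * x)"
  by (simp add: h_def Ist_le_d)

lemma h_le: "0 \<le> x \<Longrightarrow> h x \<le> mu d * kS x"
  and h_ge_d: "d \<le> x \<Longrightarrow> h x = mu d * kS x"
proof -
  have h_ell: "exp (\<gamma> * (x - (ell x - ell d))) = mu d * kS x" if "0 \<le> x" for x
  proof -
    have "exp (\<gamma> * (x - (ell x - ell d))) = exp (\<gamma> * x) * mu d / mu x"
      unfolding mu_eq_exp_ell[OF that] mu_eq_exp_ell[OF d_nonneg]
      by (simp add: algebra_simps exp_diff exp_add)
    then show ?thesis
      using kS_pos[OF that] by (simp add: mu_def)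
  qed
  show "h x \<le> mu d * kS x" if "0 \<le> x"
  proof -
    have "h x \<le> exp (\<gamma> * (x - (ell x - ell d)))"
      unfolding h_def Ist_eq_max[OF that] using gamma_pos by simp
    then show ?thesis
      using h_ell[OF that] by simp
  qed
  show "d \<le> x \<Longrightarrow> h x = mu d * kS x"
    using h_ell[of x] d_nonneg ell_mono[OF d_nonneg, of x] by (simp add: h_def Ist_eq_max)
qed

lemma set_integral_dens_h:
  "set_integrable lborel {0<..} (\<lambda>x. dens x * h x)"
  "(LINT x:{0<..}|lborel. dens x * h x) = q * lam * exp_primitive (\<gamma> - lam) d + mu d * kt (surv d)"
proof -
  have split: "{0<..} = {0<..d} \<union> {d<..}"
    using d_nonneg by auto
  have "set_integrable lborel {0<..d} (\<lambda>x. dens x * h x)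
      \<longleftrightarrow> set_integrable lborel {0<..d} (\<lambda>x. dens x * exp (\<gamma> * x))"
    "(LINT x:{0<..d}|lborel. dens x * h x) = (LINT x:{0<..d}|lborel. dens x * exp (\<gamma> * x))"
    by (rule set_integrable_cong; simp add: h_le_d)
      (rule set_lebesgue_integral_cong; simp add: h_le_d)
  then have initial: "set_integrable lborel {0<..d} (\<lambda>x. dens x * h x)"
    "(LINT x:{0<..d}|lborel. dens x * h x) = q * lam * exp_primitive (\<gamma> - lam) d"
    using set_integral_dens_exp_initial[OF d_nonneg] by simp_all
  have "set_integrable lborel {d<..} (\<lambda>x. dens x * h x)
      \<longleftrightarrow> set_integrable lborel {d<..} (\<lambda>x. mu d * (dens x * kS x))"
    "(LINT x:{d<..}|lborel. dens x * h x) = (LINT x:{d<..}|lborel. mu d * (dens x * kS x))"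
    by (rule set_integrable_cong; simp add: h_ge_d)
      (rule set_lebesgue_integral_cong; simp add: h_ge_d)
  then have tail: "set_integrable lborel {d<..} (\<lambda>x. dens x * h x)"
    "(LINT x:{d<..}|lborel. dens x * h x) = mu d * kt (surv d)"
    using set_integral_dens_kS_tail[of d] by simp_all
  show "set_integrable lborel {0<..} (\<lambda>x. dens x * h x)"
    unfolding split using initial(1) tail(1) by (rule set_integrable_Un) auto
  show "(LINT x:{0<..}|lborel. dens x * h x) = q * lam * exp_primitive (\<gamma> - lam) d + mu d * kt (surv d)"
    unfolding split using initial tail by (subst set_integral_Un) auto
qed

lemma ExpX_h: "ExpX_integrable q lam h" "ExpX q lam h = mu d"
proof -
  have "h 0 = 1"
    using h_le_d[OF d_nonneg] by simp
  then show "ExpX_integrable q lam h" "ExpX q lam h = mu d"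
    using set_integral_dens_h Phi_d
    unfolding ExpX_integrable_dens ExpX_dens Phi_def by (simp_all add: algebra_simps)
qed

lemma set_integral_dens_h_tail:
  assumes "0 \<le> t"
  shows "set_integrable lborel {t<..} (\<lambda>x. dens x * h x)"
    and "(LINT x:{t<..}|lborel. dens x * h x) \<le> mu d * kt (surv t)"
    and "d \<le> t \<Longrightarrow> (LINT x:{t<..}|lborel. dens x * h x) = mu d * kt (surv t)"
proof -
  show integrable: "set_integrable lborel {t<..} (\<lambda>x. dens x * h x)"
    by (rule set_integrable_subset[OF set_integral_dens_h(1)]) (use assms in auto)
  have "(LINT x:{t<..}|lborel. dens x * h x) \<le> (LINT x:{t<..}|lborel. mu d * (dens x * kS x))"
    using integrable set_integral_dens_kS_tail(1)[of t] h_le dens_pos assms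
    by (intro set_integral_mono) (auto intro: mult_left_mono simp: less_imp_le)
  then show "(LINT x:{t<..}|lborel. dens x * h x) \<le> mu d * kt (surv t)"
    using set_integral_dens_kS_tail(2)[of t] by simp
  assume "d \<le> t"
  then have "(LINT x:{t<..}|lborel. dens x * h x) = (LINT x:{t<..}|lborel. mu d * (dens x * kS x))"
    by (intro set_lebesgue_integral_cong) (auto simp: h_ge_d)
  then show "(LINT x:{t<..}|lborel. dens x * h x) = mu d * kt (surv t)"
    using set_integral_dens_kS_tail(2)[of t] by simp
qed

definition dens_h :: "real \<Rightarrow> real" where "dens_h x = indicator {0<..} x * (dens x * h x)"

lemma dens_h_nonneg: "0 \<le> dens_h x"
  using dens_pos[of x] h_pos[of x] by (simp add: dens_h_def)

lemma dens_h_measurable [measurable]: "dens_h \<in> borel_measurable borel"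
  unfolding dens_h_def[abs_def] by measurable

lemma survI_eq_set_integral:
  assumes "J \<in> Ic" "0 \<le> s"
  shows "survI q lam J s = (LINT x:{0<..}|lborel. dens x * (if s < J x then 1 else 0))"
  using Ic_0[OF assms(1)] assms(2) by (simp add: survI_def ExpX_def dens_def)

lemma superlevel_integrals:
  assumes J: "J \<in> Ic" "mono J" and s: "0 \<le> s"
  obtains (empty) "survI q lam J s = 0"
      "(\<integral>\<^sup>+x. ennreal (dens_h x * (if s < J x then 1 else 0)) \<partial>lborel) = 0"
    | (ray) t where "s \<le> t" "(\<forall>x\<in>{0..d}. J x = 0) \<Longrightarrow> d \<le> t" "survI q lam J s = surv t"
      "(\<integral>\<^sup>+x. ennreal (dens_h x * (if s < J x then 1 else 0)) \<partial>lborel)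
         = ennreal (LINT x:{t<..}|lborel. dens x * h x)"
proof (cases "\<exists>x>0. s < J x")
  case False
  then have vanish: "indicator {0<..} x * (dens x * (if s < J x then 1 else 0)) = (0::real)"
    "indicator {0<..} x * (dens x * h x) * (if s < J x then 1 else 0) = (0::real)" for x
    by (auto simp: indicator_def)
  have "survI q lam J s = 0"
    unfolding survI_eq_set_integral[OF J(1) s] set_lebesgue_integral_def by (simp add: vanish(1))
  moreover have "(\<integral>\<^sup>+x. ennreal (indicator {0<..} x * (dens x * h x) * (if s < J x then 1 else 0)) \<partial>lborel) = 0"
    by (simp only: vanish(2) ennreal_0 nn_integral_const mult_zero_left)
  ultimately show ?thesis
    using empty by (simp add: dens_h_def)
next
  case True
  have [measurable]: "J \<in> borel_measurable borel"
    by (rule borel_measurable_mono[OF J(2)])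
  obtain t where t: "s \<le> t" "\<And>a. \<forall>x\<in>{0..a}. J x = 0 \<Longrightarrow> a \<le> t"
    and ae_indicator: "AE x in lborel. indicator {0<..} x * (if s < J x then 1 else 0) = (indicator {t<..} x :: real)"
    using Ic_superlevel_AE_ray[OF J s True] by blast
  have "survI q lam J s = (LINT x|lborel. indicator {t<..} x * dens x)"
    unfolding survI_eq_set_integral[OF J(1) s] set_lebesgue_integral_def
    using ae_indicator by (intro integral_cong_AE) (auto elim!: eventually_mono simp: algebra_simps)
  also have "\<dots> = surv t"
    using set_integral_dens_tail(2)[of t] by (simp add: set_lebesgue_integral_def)
  finally have "survI q lam J s = surv t" .
  moreover have "(\<integral>\<^sup>+x. ennreal (indicator {0<..} x * (dens x * h x) * (if s < J x then 1 else 0)) \<partial>lborel)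
      = (\<integral>\<^sup>+x. ennreal (indicator {t<..} x * (dens x * h x)) \<partial>lborel)"
    using ae_indicator by (intro nn_integral_cong_AE) (auto elim!: eventually_mono simp: algebra_simps)
  moreover have "integrable lborel (\<lambda>x. indicator {t<..} x * (dens x * h x))"
    using set_integral_dens_h_tail(1)[of t] t(1) s by (simp add: set_integrable_def)
  then have "(\<integral>\<^sup>+x. ennreal (indicator {t<..} x * (dens x * h x)) \<partial>lborel)
      = ennreal (LINT x:{t<..}|lborel. dens x * h x)"
    unfolding set_lebesgue_integral_def
    by (simp add: nn_integral_eq_integral dens_pos h_pos less_imp_le)
  ultimately show ?thesis
    using ray t by (simp add: dens_h_def)
qed

lemma survI_bounds:
  assumes "J \<in> Ic" "mono J" "0 \<le> s"
  shows "0 \<le> survI q lam J s \<and> survI q lam J s \<le> surv s"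
proof (cases rule: superlevel_integrals[OF assms, case_names empty ray])
  case empty
  then show ?thesis
    using surv_pos[of s] by simp
next
  case (ray t)
  then show ?thesis
    using surv_pos[of t] surv_strict_antimono[of s t] by (auto simp: le_less)
qed

lemma nn_integral_superlevel_le:
  assumes "J \<in> Ic" "mono J" "0 \<le> s"
  shows "(\<integral>\<^sup>+x. ennreal (dens_h x * (if s < J x then 1 else 0)) \<partial>lborel) \<le> ennreal (mu d * kt (survI q lam J s))"
proof (cases rule: superlevel_integrals[OF assms, case_names empty ray])
  case (ray t)
  then show ?thesis
    using set_integral_dens_h_tail(2)[of t] assms(3) by (simp add: ennreal_leI)
qed simp

lemma nn_integral_superlevel_eq:
  assumes "J \<in> Ic" "mono J" "0 \<le> s" and vanish: "\<forall>x\<in>{0..d}. J x = 0"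
  shows "(\<integral>\<^sup>+x. ennreal (dens_h x * (if s < J x then 1 else 0)) \<partial>lborel) = ennreal (mu d * kt (survI q lam J s))"
proof (cases rule: superlevel_integrals[OF assms(1-3), case_names empty ray])
  case (ray t)
  then show ?thesis
    using set_integral_dens_h_tail(3)[of t] assms(3) vanish by simp
qed simp

lemma set_integrable_kt_survI:
  assumes J: "J \<in> Ic" "mono J"
  shows "set_integrable lborel {0..} (\<lambda>s. kt (survI q lam J s))"
proof (rule set_integrable_bound)
  have [measurable]: "J \<in> borel_measurable borel"
    by (rule borel_measurable_mono[OF J(2)])
  show "set_integrable lborel {0..} (\<lambda>s. (1 + \<theta> + \<alpha>) * q * exp (- lam * s))"
    using set_integrable_exp_neg[OF lam_pos, of 0] by simp
  show "set_borel_measurable lborel {0..} (\<lambda>s. kt (survI q lam J s))"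
    unfolding set_borel_measurable_def ktilde_def by measurable
  show "AE s in lborel. s \<in> {0..} \<longrightarrow> norm (kt (survI q lam J s)) \<le> norm ((1 + \<theta> + \<alpha>) * q * exp (- lam * s))"
  proof (intro AE_I2 impI)
    fix s :: real assume "s \<in> {0..}"
    then have bounds: "0 \<le> survI q lam J s" "survI q lam J s \<le> surv s" "surv s \<le> 1"
      using survI_bounds[OF J, of s] surv_le_q[of s] q_le_1 by auto
    have "kt (survI q lam J s) \<le> (1 + \<theta> + \<alpha>) * surv s"
      using kt_le_linear[OF bounds(1)] bounds(2) theta_nonneg alpha_nonneg
      by (smt (verit) mult_left_mono)
    moreover have "0 \<le> kt (survI q lam J s)"
      using kt_nonneg bounds by simp
    ultimately show "norm (kt (survI q lam J s)) \<le> norm ((1 + \<theta> + \<alpha>) * q * exp (- lam * s))"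
      using theta_nonneg alpha_nonneg q_pos by (simp add: surv_def mult.assoc)
  qed
qed

lemma kt_survI_nonneg:
  assumes "J \<in> Ic" "mono J" "0 \<le> s"
  shows "0 \<le> kt (survI q lam J s)"
  using survI_bounds[OF assms] surv_le_q[OF assms(3)] q_le_1 by (intro kt_nonneg) auto

lemma premium_nonneg:
  assumes "J \<in> Ic" "mono J"
  shows "0 \<le> premium \<theta> \<alpha> q lam J"
  unfolding premium_def set_lebesgue_integral_def
  using kt_survI_nonneg[OF assms] by (intro integral_nonneg_AE AE_I2) (simp add: indicator_def)

text \<open>The hypotheses \<open>mono J\<close> and \<open>0 \<le> J x\<close> of the next lemmas hold for \<open>\<lambda>x. J (max 0 x)\<close>
  whenever \<open>J \<in> Ic\<close> (\<open>Ic_extend_constant\<close>), and this function agrees with \<open>J\<close> on the support of \<open>X\<close>.\<close>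

lemma ExpX_integrable_h_mult_normalized:
  assumes J: "J \<in> Ic" "mono J" "\<And>x. 0 \<le> J x"
  shows "ExpX_integrable q lam (\<lambda>x. h x * J x)"
  unfolding ExpX_integrable_dens
proof (rule set_integrable_bound)
  have [measurable]: "J \<in> borel_measurable borel"
    by (rule borel_measurable_mono[OF J(2)])
  show "set_integrable lborel {0<..} (\<lambda>x. mu d * (1 + \<theta> + \<alpha>) * (x * dens x))"
    using set_integrable_mult_dens by simp
  show "set_borel_measurable lborel {0<..} (\<lambda>x. dens x * (h x * J x))"
    unfolding set_borel_measurable_def by measurable
  show "AE x in lborel. x \<in> {0<..} \<longrightarrow> norm (dens x * (h x * J x)) \<le> norm (mu d * (1 + \<theta> + \<alpha>) * (x * dens x))"
  proof (intro AE_I2 impI)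
    fix x :: real assume "x \<in> {0<..}"
    then have "h x \<le> mu d * (1 + \<theta> + \<alpha>)" "J x \<le> x"
      using h_le[of x] kS_le[of x] mu_pos[OF d_nonneg] Ic_le[OF J(1), of x]
      by (auto intro: order.trans mult_left_mono)
    then have "dens x * (h x * J x) \<le> mu d * (1 + \<theta> + \<alpha>) * (x * dens x)"
      using dens_pos[of x] h_pos[of x] J(3)[of x]
      by (simp add: mult.left_commute[of "dens x"] mult_mono mult_left_mono)
    moreover have "0 \<le> dens x * (h x * J x)"
      using dens_pos[of x] h_pos[of x] J(3)[of x] by simp
    ultimately show "norm (dens x * (h x * J x)) \<le> norm (mu d * (1 + \<theta> + \<alpha>) * (x * dens x))"
      using abs_ge_self[of "mu d * (1 + \<theta> + \<alpha>) * (x * dens x)"] by simp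
  qed
qed

lemma ExpX_h_mult_layer_cake:
  assumes J: "J \<in> Ic" "mono J" "\<And>x. 0 \<le> J x"
  shows "ennreal (ExpX q lam (\<lambda>x. h x * J x))
    = (\<integral>\<^sup>+s. indicator {0..} s * (\<integral>\<^sup>+x. ennreal (dens_h x * (if s < J x then 1 else 0)) \<partial>lborel) \<partial>lborel)"
proof -
  have [measurable]: "J \<in> borel_measurable borel"
    by (rule borel_measurable_mono[OF J(2)])
  have "ExpX q lam (\<lambda>x. h x * J x) = (LINT x|lborel. dens_h x * J x)"
    using Ic_0[OF J(1)] by (simp add: ExpX_dens set_lebesgue_integral_def dens_h_def ac_simps)
  also have "ennreal \<dots> = (\<integral>\<^sup>+x. ennreal (dens_h x * J x) \<partial>lborel)"
    using ExpX_integrable_h_mult_normalized[OF J] dens_h_nonneg J(3)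
    unfolding ExpX_integrable_dens set_integrable_def
    by (intro nn_integral_eq_integral[symmetric]) (auto simp: dens_h_def ac_simps)
  also have "\<dots> = (\<integral>\<^sup>+s. indicator {0..} s * (\<integral>\<^sup>+x. ennreal (dens_h x * (if s < J x then 1 else 0)) \<partial>lborel) \<partial>lborel)"
    by (rule nn_integral_layer_cake) (simp_all add: dens_h_nonneg J(3))
  finally show ?thesis .
qed

lemma ennreal_mu_premium:
  assumes J: "J \<in> Ic" "mono J"
  shows "ennreal (mu d * premium \<theta> \<alpha> q lam J)
    = (\<integral>\<^sup>+s. indicator {0..} s * ennreal (mu d * kt (survI q lam J s)) \<partial>lborel)"
proof -
  have "mu d * premium \<theta> \<alpha> q lam J = (LINT s:{0..}|lborel. mu d * kt (survI q lam J s))"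
    by (simp add: premium_def)
  then have "ennreal (mu d * premium \<theta> \<alpha> q lam J)
      = ennreal (LINT s|lborel. indicator {0..} s * (mu d * kt (survI q lam J s)))"
    by (simp only: set_lebesgue_integral_def real_scaleR_def)
  also have "\<dots> = (\<integral>\<^sup>+s. ennreal (indicator {0..} s * (mu d * kt (survI q lam J s))) \<partial>lborel)"
  proof -
    have "set_integrable lborel {0..} (\<lambda>s. mu d * kt (survI q lam J s))"
      using set_integrable_kt_survI[OF J] by simp
    then show ?thesis
      unfolding set_integrable_def using kt_survI_nonneg[OF J] mu_pos[OF d_nonneg]
      by (intro nn_integral_eq_integral[symmetric] AE_I2) (auto simp: indicator_def)
  qed
  also have "\<dots> = (\<integral>\<^sup>+s. indicator {0..} s * ennreal (mu d * kt (survI q lam J s)) \<partial>lborel)"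
    by (intro nn_integral_cong) (simp add: indicator_def)
  finally show ?thesis .
qed

lemma ExpX_h_mult_le_normalized:
  assumes J: "J \<in> Ic" "mono J" "\<And>x. 0 \<le> J x"
  shows "ExpX q lam (\<lambda>x. h x * J x) \<le> mu d * premium \<theta> \<alpha> q lam J"
proof -
  have "ennreal (ExpX q lam (\<lambda>x. h x * J x)) \<le> ennreal (mu d * premium \<theta> \<alpha> q lam J)"
    unfolding ExpX_h_mult_layer_cake[OF J] ennreal_mu_premium[OF J(1,2)]
    using nn_integral_superlevel_le[OF J(1,2)]
    by (intro nn_integral_mono) (auto split: split_indicator)
  moreover have "0 \<le> mu d * premium \<theta> \<alpha> q lam J"
    using mu_pos[OF d_nonneg] premium_nonneg[OF J(1,2)] by simp
  ultimately show ?thesis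
    by simp
qed

lemma ExpX_h_mult_eq_normalized:
  assumes J: "J \<in> Ic" "mono J" "\<And>x. 0 \<le> J x" and vanish: "\<forall>x\<in>{0..d}. J x = 0"
  shows "ExpX q lam (\<lambda>x. h x * J x) = mu d * premium \<theta> \<alpha> q lam J"
proof -
  have "ennreal (ExpX q lam (\<lambda>x. h x * J x)) = ennreal (mu d * premium \<theta> \<alpha> q lam J)"
    unfolding ExpX_h_mult_layer_cake[OF J] ennreal_mu_premium[OF J(1,2)]
    using nn_integral_superlevel_eq[OF J(1,2) _ vanish]
    by (intro nn_integral_cong) (auto split: split_indicator)
  moreover have "0 \<le> ExpX q lam (\<lambda>x. h x * J x)"
    using q_pos q_le_1 lam_pos h_pos J(3) by (intro ExpX_nonneg) (auto simp: less_imp_le)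
  moreover have "0 \<le> mu d * premium \<theta> \<alpha> q lam J"
    using mu_pos[OF d_nonneg] premium_nonneg[OF J(1,2)] by simp
  ultimately show ?thesis
    by simp
qed

lemma ExpX_h_mult:
  assumes "J \<in> Ic"
  shows "ExpX_integrable q lam (\<lambda>x. h x * J x)"
    and "ExpX q lam (\<lambda>x. h x * J x) \<le> mu d * premium \<theta> \<alpha> q lam J"
proof -
  define J' where "J' x = J (max 0 x)" for x
  have J': "J' \<in> Ic" "mono J'" "\<And>x. 0 \<le> J' x"
    using Ic_extend_constant[OF assms] by (simp_all add: J'_def[abs_def])
  have agree: "0 \<le> x \<Longrightarrow> J x = J' x" for x
    by (simp add: J'_def)
  show "ExpX_integrable q lam (\<lambda>x. h x * J x)"
    using ExpX_integrable_h_mult_normalized[OF J'] by (simp add: agree cong: ExpX_integrable_cong)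
  show "ExpX q lam (\<lambda>x. h x * J x) \<le> mu d * premium \<theta> \<alpha> q lam J"
    using ExpX_h_mult_le_normalized[OF J'] premium_cong[OF agree]
    by (simp add: agree cong: ExpX_cong)
qed

lemma ExpX_h_mult_Ist: "ExpX q lam (\<lambda>x. h x * Ist x) = mu d * premium \<theta> \<alpha> q lam Ist"
  using ExpX_h_mult_eq_normalized[OF Ist_in_Ic Ist_mono Ist_nonneg] Ist_le_d by simp

lemma exp_final_wealth_Ist:
  "exp (- \<gamma> * final_wealth w \<theta> \<alpha> q lam Ist x) = exp (- \<gamma> * (w - premium \<theta> \<alpha> q lam Ist)) * h x"
  by (simp add: final_wealth_def h_def exp_add[symmetric] algebra_simps)

lemma EU_integrable_Ist:
  assumes u: "\<And>x. (u has_real_derivative exp (- \<gamma> * x)) (at x)"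
  shows "EU_integrable u w \<theta> \<alpha> q lam Ist"
proof -
  define K where "K = exp (- \<gamma> * (w - premium \<theta> \<alpha> q lam Ist))"
  have "(\<lambda>x. u (final_wealth w \<theta> \<alpha> q lam Ist x)) = (\<lambda>x. (u 0 + 1 / \<gamma>) - (K / \<gamma>) * h x)"
  proof
    fix x
    show "u (final_wealth w \<theta> \<alpha> q lam Ist x) = (u 0 + 1 / \<gamma>) - (K / \<gamma>) * h x"
      using cara_utility_eq[OF gamma_pos u, of "final_wealth w \<theta> \<alpha> q lam Ist x"] exp_final_wealth_Ist[of w x]
      by (simp add: K_def diff_divide_distrib)
  qed
  then show ?thesis
    unfolding EU_integrable_iff
    by (simp only: ExpX_integrable_diff[OF ExpX_integrable_const[OF lam_pos] ExpX_integrable_cmult[OF ExpX_h(1)]])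
qed

lemma first_order_condition:
  assumes J: "J \<in> Ic"
  defines "c \<equiv> premium \<theta> \<alpha> q lam J - premium \<theta> \<alpha> q lam Ist"
  shows "ExpX_integrable q lam (\<lambda>x. h x * J x - h x * Ist x - c * h x)"
    and "ExpX q lam (\<lambda>x. h x * J x - h x * Ist x - c * h x) \<le> 0"
proof -
  have int: "ExpX_integrable q lam (\<lambda>x. h x * J x)" "ExpX_integrable q lam (\<lambda>x. h x * Ist x)"
    "ExpX_integrable q lam (\<lambda>x. c * h x)"
    using ExpX_h_mult(1) J Ist_in_Ic ExpX_integrable_cmult[OF ExpX_h(1)] by auto
  show "ExpX_integrable q lam (\<lambda>x. h x * J x - h x * Ist x - c * h x)"
    by (rule ExpX_integrable_diff[OF ExpX_integrable_diff[OF int(1,2)] int(3)])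
  have "ExpX q lam (\<lambda>x. h x * J x - h x * Ist x - c * h x)
      = ExpX q lam (\<lambda>x. h x * J x) - mu d * premium \<theta> \<alpha> q lam Ist - c * mu d"
    unfolding ExpX_diff[OF ExpX_integrable_diff[OF int(1,2)] int(3)] ExpX_diff[OF int(1,2)]
      ExpX_cmult ExpX_h(2) ExpX_h_mult_Ist ..
  also have "\<dots> \<le> 0"
    using ExpX_h_mult(2)[OF J] by (simp add: c_def algebra_simps)
  finally show "ExpX q lam (\<lambda>x. h x * J x - h x * Ist x - c * h x) \<le> 0" .
qed

text \<open>First-order expansion of \<open>u\<close> around the final wealth under \<open>Ist\<close>; the expectation of the
  linear term is controlled by \<open>first_order_condition\<close>.\<close>

lemma EU_plus_gap_le_EU_Ist:
  assumes u: "\<And>x. (u has_real_derivative exp (- \<gamma> * x)) (at x)"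
    and J: "J \<in> Ic" and integrable: "EU_integrable u w \<theta> \<alpha> q lam J"
  defines "gap \<equiv> \<lambda>x. cara_gap \<gamma> (final_wealth w \<theta> \<alpha> q lam Ist x) (final_wealth w \<theta> \<alpha> q lam J x)"
  shows "ExpX_integrable q lam gap"
    and "EU u w \<theta> \<alpha> q lam J + ExpX q lam gap \<le> EU u w \<theta> \<alpha> q lam Ist"
proof -
  let ?W = "final_wealth w \<theta> \<alpha> q lam"
  define K where "K = exp (- \<gamma> * (w - premium \<theta> \<alpha> q lam Ist))"
  define c where "c = premium \<theta> \<alpha> q lam J - premium \<theta> \<alpha> q lam Ist"
  define M where "M x = K * (h x * J x - h x * Ist x - c * h x)" for x
  have gap_eq: "gap x = u (?W Ist x) + M x - u (?W J x)" for x
  proof -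
    have "exp (- \<gamma> * ?W Ist x) = K * h x"
      unfolding K_def by (rule exp_final_wealth_Ist)
    moreover have "?W J x - ?W Ist x = J x - Ist x - c"
      by (simp add: final_wealth_def c_def)
    ultimately have "u (?W J x) = u (?W Ist x) + K * h x * (J x - Ist x - c) - gap x"
      using cara_utility_expansion[OF gamma_pos u, of "?W J x" "?W Ist x"] by (simp add: gap_def)
    then show ?thesis
      by (simp add: M_def algebra_simps)
  qed
  note linear = first_order_condition[OF J, folded c_def]
  have int_M: "ExpX_integrable q lam M"
    unfolding M_def by (rule ExpX_integrable_cmult[OF linear(1)])
  have M_nonpos: "ExpX q lam M \<le> 0"
    unfolding M_def ExpX_cmult using linear(2) by (simp add: K_def mult_nonneg_nonpos)
  have int_Ist: "ExpX_integrable q lam (\<lambda>x. u (?W Ist x))"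
    and int_J: "ExpX_integrable q lam (\<lambda>x. u (?W J x))"
    using EU_integrable_Ist[OF u] integrable by (simp_all only: EU_integrable_iff)
  have gap_fun: "gap = (\<lambda>x. u (?W Ist x) + M x - u (?W J x))"
    using gap_eq by (rule ext)
  show "ExpX_integrable q lam gap"
    unfolding gap_fun by (intro ExpX_integrable_diff ExpX_integrable_add int_Ist int_M int_J)
  have "ExpX q lam gap = EU u w \<theta> \<alpha> q lam Ist + ExpX q lam M - EU u w \<theta> \<alpha> q lam J"
    unfolding gap_fun EU_eq_ExpX ExpX_diff[OF ExpX_integrable_add[OF int_Ist int_M] int_J]
      ExpX_add[OF int_Ist int_M] ..
  then show "EU u w \<theta> \<alpha> q lam J + ExpX q lam gap \<le> EU u w \<theta> \<alpha> q lam Ist"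
    using M_nonpos by simp
qed

lemma Ist_optimal:
  assumes u: "\<And>x. (u has_real_derivative exp (- \<gamma> * x)) (at x)"
  shows "optimal u w \<theta> \<alpha> q lam Ist"
  unfolding optimal_def
proof (intro conjI ballI impI)
  show "Ist \<in> Ic" by (rule Ist_in_Ic)
  show "EU_integrable u w \<theta> \<alpha> q lam Ist" by (rule EU_integrable_Ist[OF u])
  fix J assume J: "J \<in> Ic" "EU_integrable u w \<theta> \<alpha> q lam J"
  have "0 \<le> ExpX q lam (\<lambda>x. cara_gap \<gamma> (final_wealth w \<theta> \<alpha> q lam Ist x) (final_wealth w \<theta> \<alpha> q lam J x))"
    using q_pos q_le_1 lam_pos cara_gap_nonneg[OF gamma_pos] by (intro ExpX_nonneg) auto
  then show "EU u w \<theta> \<alpha> q lam J \<le> EU u w \<theta> \<alpha> q lam Ist"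
    using EU_plus_gap_le_EU_Ist(2)[OF u J] by linarith
qed

lemma optimal_imp_ae_equal_Ist:
  assumes u: "\<And>x. (u has_real_derivative exp (- \<gamma> * x)) (at x)"
    and opt: "optimal u w \<theta> \<alpha> q lam I"
  shows "ae_equal_X q I Ist"
proof -
  have I: "I \<in> Ic" "EU_integrable u w \<theta> \<alpha> q lam I"
    and le: "EU u w \<theta> \<alpha> q lam Ist \<le> EU u w \<theta> \<alpha> q lam I"
    using opt Ist_in_Ic EU_integrable_Ist[OF u] unfolding optimal_def by auto
  define gap where "gap x = cara_gap \<gamma> (final_wealth w \<theta> \<alpha> q lam Ist x) (final_wealth w \<theta> \<alpha> q lam I x)" for x
  have gap_nonneg: "0 \<le> gap x" for x
    using cara_gap_nonneg[OF gamma_pos] by (simp add: gap_def)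
  have "ExpX q lam gap \<le> 0"
    using EU_plus_gap_le_EU_Ist(2)[OF u I] le unfolding gap_def[abs_def] by linarith
  moreover have "0 \<le> ExpX q lam gap"
    using q_pos q_le_1 lam_pos gap_nonneg by (intro ExpX_nonneg) auto
  ultimately have "AE x in lborel. 0 < x \<longrightarrow> gap x = 0"
    using EU_plus_gap_le_EU_Ist(1)[OF u I] q_pos q_le_1 lam_pos gap_nonneg
    by (intro ExpX_eq_0_imp_AE) (auto simp: gap_def[abs_def])
  then have ae_const: "AE x in lborel. 0 < x \<longrightarrow> I x - Ist x = premium \<theta> \<alpha> q lam I - premium \<theta> \<alpha> q lam Ist"
    by eventually_elim (auto simp: gap_def cara_gap_eq_0_iff[OF gamma_pos] final_wealth_def)
  then have "premium \<theta> \<alpha> q lam I - premium \<theta> \<alpha> q lam Ist = 0"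
    by (rule Ic_AE_diff_const[OF I(1) Ist_in_Ic])
  with ae_const have "AE x in lborel. 0 < x \<longrightarrow> I x = Ist x"
    by (auto elim: eventually_mono)
  moreover have "I 0 = Ist 0"
    using Ic_0[OF I(1)] Ic_0[OF Ist_in_Ic] by simp
  ultimately show ?thesis
    unfolding ae_equal_X_def by auto
qed

end

theorem proposition4p6:
  fixes q lam \<gamma> \<theta> \<alpha> w :: real and u :: "real \<Rightarrow> real"
  assumes hq: "0 < q" "q \<le> 1"
    and hlam: "lam > 0" and hgam: "\<gamma> > 0"
    and h\<theta>: "\<theta> \<ge> 0" and h\<alpha>: "\<alpha> \<ge> 0"
    and hu: "\<And>x. (u has_real_derivative exp (- \<gamma> * x)) (at x)"
    and hcond: "\<gamma> * ((1 + \<theta>) + \<alpha> * (1 - 2 * q)) > 2 * \<alpha> * q * lam"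
  shows "(\<exists>!d. d \<ge> 0 \<and> dstar_eq \<theta> \<alpha> q lam \<gamma> d) \<and>
         (\<forall>d. d \<ge> 0 \<and> dstar_eq \<theta> \<alpha> q lam \<gamma> d \<longrightarrow>
            optimal u w \<theta> \<alpha> q lam (Istar \<theta> \<alpha> q lam \<gamma> d) \<and>
            (\<forall>I. optimal u w \<theta> \<alpha> q lam I \<longrightarrow> ae_equal_X q I (Istar \<theta> \<alpha> q lam \<gamma> d)) \<and>
            (d > 0 \<longleftrightarrow> (\<theta> > 0 \<or> (q < 1 \<and> \<alpha> > 0))))"
proof -
  interpret exp_loss_model q lam \<gamma> \<theta> \<alpha>
    using assms by unfold_locales auto
  have "\<exists>!d. d \<ge> 0 \<and> dstar_eq \<theta> \<alpha> q lam \<gamma> d"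
    using Phi_root_exists Phi_root_unique dstar_eq_iff_Phi by blast
  moreover have "optimal u w \<theta> \<alpha> q lam (Istar \<theta> \<alpha> q lam \<gamma> d) \<and>
      (\<forall>I. optimal u w \<theta> \<alpha> q lam I \<longrightarrow> ae_equal_X q I (Istar \<theta> \<alpha> q lam \<gamma> d)) \<and>
      (d > 0 \<longleftrightarrow> (\<theta> > 0 \<or> (q < 1 \<and> \<alpha> > 0)))"
    if "d \<ge> 0" "dstar_eq \<theta> \<alpha> q lam \<gamma> d" for d
  proof -
    interpret optimal_deductible q lam \<gamma> \<theta> \<alpha> d
      using that dstar_eq_iff_Phi by unfold_locales auto
    show ?thesis
      using Ist_optimal[OF hu] optimal_imp_ae_equal_Ist[OF hu] Phi_root_pos_iff[OF d_nonneg Phi_d]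
      by blast
  qed
  ultimately show ?thesis
    by blast
qed

end
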